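(* Let $T$ be a finite set of students and $S$ a finite set of schools, school $s$ having capacity $q_s$. Each student $t$ submits an ordered list $\mathcal{L}_t=(s_t^1,\dots,s_t^{L_t})$ of distinct schools. For each school $s$, let $\mathcal{L}_s=\{t: s\in\mathcal{L}_t\}$ be its applicants; $s$ partitions $\mathcal{L}_s$ into acceptable and unacceptable applicants and strictly ranks the acceptable ones by a priority order $pr_s$. Let $\mu$ be the outcome of the student-proposing deferred acceptance algorithm run on these submitted lists and priorities (so each matched student $t$ has $\mu(t)\in\mathcal{L}_t$ and is acceptable to $\mu(t)$, and unacceptable applicants are never admitted). Suppose $\mu$ is non-wasteful: either $|\mu(s)|=q_s$ for every school $s$, or no student is unmatched. Then there exist a strict preference order $\succ_t$ over all of $S$ for each student $t$ and a strict priority order $\rhd_s$ over all of $T$ for each school $s$ such that (1) they are consistent with the submitted data: for each $t$, if $s,s'\in\mathcal{L}_t$ and $s$ appears before $s'$ in $\mathcal{L}_t$ then $s\succ_t s'$; for each $s$, if $t,t'$ are acceptable applicants of $s$ with $t$ ranked above $t'$ by $pr_s$ then $t\rhd_s t'$, and every acceptable applicant of $s$ is ranked by $\rhd_s$ above every unacceptable applicant of $s$; and (2) $\mu$ is stable under $(\succ,\rhd)$.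
   Context: A matching $\mu$ assigns each student $t$ either a school $\mu(t)\in S$ or leaves $t$ unmatched ($\mu(t)=t$), with $\mu(s)=\{t:\mu(t)=s\}$ and $|\mu(s)|\le q_s$. Under complete preferences, every student prefers any school to being unmatched. A matching $\mu$ is stable under $(\succ,\rhd)$ if there is no pair $(t,s)$ of a student and a school with either (i) $\mu(t)=t$ and $|\mu(s)|<q_s$, or (ii) $s\succ_t\mu(t)$ and $t\rhd_s t'$ for some $t'\in\mu(s)$. *)

theory Defs
  imports Main
begin

(* Submitted data:
   T :: 't set        finite set of students
   L :: 't => 's list  ordered (distinct) rank-order list of student t, first = most preferred
   q :: 's => nat      capacities
   pr :: 's => 't list  the acceptable applicants of s, listed by priority pr_s (first = highest);
                        applicants of s not in set (pr s) are unacceptable. *)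

definition applicants :: "'t set \<Rightarrow> ('t \<Rightarrow> 's list) \<Rightarrow> 's \<Rightarrow> 't set" where
  "applicants T L s = {t \<in> T. s \<in> set (L t)}"

(* State: idx t = number of rejections received by t,
   so t currently proposes to L t ! idx t (if idx t < length (L t)). *)
definition da_proposers :: "'t set \<Rightarrow> ('t \<Rightarrow> 's list) \<Rightarrow> ('t \<Rightarrow> nat) \<Rightarrow> 's \<Rightarrow> 't set" where
  "da_proposers T L idx s = {t \<in> T. idx t < length (L t) \<and> L t ! idx t = s}"

definition da_kept :: "'t set \<Rightarrow> ('t \<Rightarrow> 's list) \<Rightarrow> ('s \<Rightarrow> nat) \<Rightarrow> ('s \<Rightarrow> 't list)
    \<Rightarrow> ('t \<Rightarrow> nat) \<Rightarrow> 's \<Rightarrow> 't set" where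
  "da_kept T L q pr idx s = set (take (q s) (filter (\<lambda>t. t \<in> da_proposers T L idx s) (pr s)))"

definition da_step :: "'t set \<Rightarrow> ('t \<Rightarrow> 's list) \<Rightarrow> ('s \<Rightarrow> nat) \<Rightarrow> ('s \<Rightarrow> 't list)
    \<Rightarrow> ('t \<Rightarrow> nat) \<Rightarrow> ('t \<Rightarrow> nat)" where
  "da_step T L q pr idx = (\<lambda>t. if t \<in> T \<and> idx t < length (L t)
        \<and> t \<notin> da_kept T L q pr idx (L t ! idx t) then Suc (idx t) else idx t)"

(* Each non-terminal round increases the total number of rejections, which is bounded by the
   sum of list lengths; hence after that many rounds the algorithm has terminated. *)
definition da_idx :: "'t set \<Rightarrow> ('t \<Rightarrow> 's list) \<Rightarrow> ('s \<Rightarrow> nat) \<Rightarrow> ('s \<Rightarrow> 't list) \<Rightarrow> 't \<Rightarrow> nat" where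
  "da_idx T L q pr = (da_step T L q pr ^^ (\<Sum>t\<in>T. length (L t))) (\<lambda>_. 0)"

definition DA :: "'t set \<Rightarrow> ('t \<Rightarrow> 's list) \<Rightarrow> ('s \<Rightarrow> nat) \<Rightarrow> ('s \<Rightarrow> 't list) \<Rightarrow> 't \<Rightarrow> 's option" where
  "DA T L q pr t = (let i = da_idx T L q pr t in
      if t \<in> T \<and> i < length (L t) then Some (L t ! i) else None)"

definition assigned :: "'t set \<Rightarrow> ('t \<Rightarrow> 's option) \<Rightarrow> 's \<Rightarrow> 't set" where
  "assigned T mu s = {t \<in> T. mu t = Some s}"

(* s \<succ>_t mu(t), with complete preferences (any school beats being unmatched);
   (a,b) \<in> pref t means a \<succ>_t b *)
definition prefers_to_match :: "('t \<Rightarrow> ('s \<times> 's) set) \<Rightarrow> ('t \<Rightarrow> 's option) \<Rightarrow> 't \<Rightarrow> 's \<Rightarrow> bool" where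
  "prefers_to_match pref mu t s = (case mu t of None \<Rightarrow> True | Some s0 \<Rightarrow> (s, s0) \<in> pref t)"

(* (t,t') \<in> prio s means t \<rhd>_s t' *)
definition stable :: "'t set \<Rightarrow> 's set \<Rightarrow> ('s \<Rightarrow> nat) \<Rightarrow> ('t \<Rightarrow> ('s \<times> 's) set)
    \<Rightarrow> ('s \<Rightarrow> ('t \<times> 't) set) \<Rightarrow> ('t \<Rightarrow> 's option) \<Rightarrow> bool" where
  "stable T S q pref prio mu \<longleftrightarrow>
     (\<forall>t\<in>T. \<forall>s\<in>S. \<not> (mu t = None \<and> card (assigned T mu s) < q s)
        \<and> \<not> (prefers_to_match pref mu t s \<and> (\<exists>t'\<in>assigned T mu s. (t, t') \<in> prio s)))"

end

theory Submission
  imports Defs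
begin

(* Each student's list is extended to a linear order on all schools by ranking schools by their
   position in the list (unlisted schools last), and each school's priority list to a linear order
   on all students by position in pr s, so that acceptable applicants come first; remaining ties
   are broken by an arbitrary injection into nat.

   Stability rests on an invariant of deferred acceptance: once s has rejected an acceptable
   student t, s receives at least q s proposals from students it ranks above t.  It survives a
   round because the q s proposals that s keeps all come from such students, and they are not
   rejected.  A round that changes anything adds a rejection, and there are at most as many
   rejections as list entries, so the iteration defining DA ends in a fixpoint where every
   proposal is kept.  If t prefers s to its match then t was rejected by s, and if t also
   outranks some t' in mu(s) then t is acceptable at s, so the invariant ranks t' above t.
   The other kind of blocking pair is excluded by non-wastefulness. *)

definition index :: "'a list \<Rightarrow> 'a \<Rightarrow> nat" where
  "index xs x = length (takeWhile (\<lambda>y. y \<noteq> x) xs)"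

lemma index_less_length_iff: "index xs x < length xs \<longleftrightarrow> x \<in> set xs"
  unfolding index_def by (induction xs) auto

lemma index_eq_length_if_notin: "x \<notin> set xs \<Longrightarrow> index xs x = length xs"
  unfolding index_def by (induction xs) auto

lemma nth_index: "x \<in> set xs \<Longrightarrow> xs ! index xs x = x"
  unfolding index_def by (induction xs) auto

lemma index_nth_le: "i < length xs \<Longrightarrow> index xs (xs ! i) \<le> i"
  unfolding index_def by (induction xs arbitrary: i) (auto simp: nth_Cons split: nat.split)

lemma index_nth: "distinct xs \<Longrightarrow> i < length xs \<Longrightarrow> index xs (xs ! i) = i"
  by (metis index_less_length_iff nth_eq_iff_index_eq nth_index nth_mem)

lemma index_less_if_in_take: "x \<in> set (take n xs) \<Longrightarrow> index xs x < n"
  unfolding index_def by (induction xs arbitrary: n) (auto simp: take_Cons split: nat.splits)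

lemma takeWhile_neq_eq_take_index: "takeWhile (\<lambda>y. y \<noteq> x) xs = take (index xs x) xs"
  unfolding index_def by (rule takeWhile_eq_take)

lemma index_le_imp_less:
  assumes "index xs x \<le> index xs y" "y \<in> set xs" "x \<noteq> y"
  shows "x \<in> set xs \<and> index xs x < index xs y"
proof
  show x: "x \<in> set xs"
    using assms(1,2) index_less_length_iff by (metis le_less_trans)
  show "index xs x < index xs y"
    using assms nth_index[OF x] nth_index[OF assms(2)] by (metis le_neq_implies_less)
qed

lemma take_filter_takeWhile:
  "take q (filter P xs) = take q (filter P (takeWhile Q xs))"
  if "q \<le> length (filter P (takeWhile Q xs))"
proof -
  have "filter P xs = filter P (takeWhile Q xs) @ filter P (dropWhile Q xs)"
    by (metis filter_append takeWhile_dropWhile_id)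
  then show ?thesis
    using that by simp
qed

lemma le_length_filter_takeWhile_if_notin_take:
  "q \<le> length (filter P (takeWhile (\<lambda>y. y \<noteq> x) xs))"
  if mem: "x \<in> set xs" and px: "P x" and rejected: "x \<notin> set (take q (filter P xs))"
proof -
  obtain ys zs where xs: "xs = ys @ x # zs" and "x \<notin> set ys"
    using split_list_first[OF mem] by blast
  have "takeWhile (\<lambda>y. y \<noteq> x) xs = ys"
    unfolding xs using \<open>x \<notin> set ys\<close> by (induction ys) auto
  moreover have "x \<notin> set (take q (filter P ys @ x # filter P zs))"
    using px rejected xs by simp
  ultimately show ?thesis
    by (cases "q \<le> length (filter P ys)") (auto simp: take_append take_Cons')
qed

definition rank_order :: "'a set \<Rightarrow> ('a \<Rightarrow> nat) \<Rightarrow> ('a \<Rightarrow> nat) \<Rightarrow> ('a \<times> 'a) set" where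
  "rank_order A r g = {(a, b). a \<in> A \<and> b \<in> A \<and> (r a < r b \<or> r a = r b \<and> g a < g b)}"

lemma rank_order_subset: "rank_order A r g \<subseteq> A \<times> A"
  unfolding rank_order_def by auto

lemma strict_linear_order_on_rank_order:
  assumes "inj_on g A"
  shows "strict_linear_order_on A (rank_order A r g)"
proof -
  have "total_on A (rank_order A r g)"
    using assms unfolding total_on_def rank_order_def by auto (metis inj_onD linorder_neqE_nat)
  moreover have "trans (rank_order A r g)" "irrefl (rank_order A r g)"
    unfolding trans_def irrefl_def rank_order_def by auto
  ultimately show ?thesis
    unfolding strict_linear_order_on_def by blast
qed

lemma nth_in_rank_order_index:
  assumes "distinct xs" "set xs \<subseteq> A" "i < j" "j < length xs"
  shows "(xs ! i, xs ! j) \<in> rank_order A (index xs) g"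
  using assms index_nth[OF assms(1)] unfolding rank_order_def by auto

lemma listed_unlisted_in_rank_order_index:
  "x \<in> set xs \<Longrightarrow> y \<notin> set xs \<Longrightarrow> x \<in> A \<Longrightarrow> y \<in> A \<Longrightarrow> (x, y) \<in> rank_order A (index xs) g"
  unfolding rank_order_def by (simp add: index_eq_length_if_notin index_less_length_iff)

lemma rank_order_index_less:
  assumes "(x, y) \<in> rank_order A (index xs) g" "y \<in> set xs"
  shows "x \<in> set xs \<and> index xs x < index xs y"
proof (rule index_le_imp_less)
  show "index xs x \<le> index xs y" "x \<noteq> y"
    using assms(1) unfolding rank_order_def by auto
qed (fact assms(2))

lemma funpow_fixpoint_if_potential_increases:
  fixes f :: "'a \<Rightarrow> 'a" and \<phi> :: "'a \<Rightarrow> nat"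
  assumes invariant: "\<And>x. P x \<Longrightarrow> P (f x)"
    and increases: "\<And>x. P x \<Longrightarrow> f x \<noteq> x \<Longrightarrow> \<phi> x < \<phi> (f x)"
    and bounded: "\<And>x. P x \<Longrightarrow> \<phi> x \<le> N"
    and start: "P x\<^sub>0"
  shows "f ((f ^^ N) x\<^sub>0) = (f ^^ N) x\<^sub>0"
proof -
  have P: "P ((f ^^ n) x\<^sub>0)" for n
    by (induction n) (simp_all add: start invariant)
  have "f ((f ^^ n) x\<^sub>0) = (f ^^ n) x\<^sub>0 \<or> n \<le> \<phi> ((f ^^ n) x\<^sub>0)" for n
  proof (induction n)
    case (Suc n)
    then show ?case
      using increases[OF P[of n]] by (cases "f ((f ^^ n) x\<^sub>0) = (f ^^ n) x\<^sub>0") auto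
  qed simp
  then show ?thesis
    using increases[OF P[of N]] bounded[OF P[of "Suc N"]] by fastforce
qed

lemma da_step_ge: "idx t \<le> da_step T L q pr idx t"
  unfolding da_step_def by simp

lemma da_step_changed:
  assumes "da_step T L q pr idx t \<noteq> idx t"
  shows "t \<in> T \<and> idx t < length (L t) \<and> t \<notin> da_kept T L q pr idx (L t ! idx t)
    \<and> da_step T L q pr idx t = Suc (idx t)"
  using assms unfolding da_step_def by (auto split: if_splits)

lemma da_kept_subset: "da_kept T L q pr idx s \<subseteq> da_proposers T L idx s \<inter> set (pr s)"
  unfolding da_kept_def by (auto dest: in_set_takeD)

lemma da_kept_subset_proposers_step:
  "da_kept T L q pr idx s \<subseteq> da_proposers T L (da_step T L q pr idx) s"
proof
  fix x assume kept: "x \<in> da_kept T L q pr idx s"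
  then have "x \<in> da_proposers T L idx s"
    using da_kept_subset[of T L q pr idx s] by blast
  moreover from this have "da_step T L q pr idx x = idx x"
    using kept unfolding da_step_def da_proposers_def by auto
  ultimately show "x \<in> da_proposers T L (da_step T L q pr idx) s"
    unfolding da_proposers_def by simp
qed

lemma da_proposers_subset_kept_if_fixpoint:
  "da_step T L q pr idx = idx \<Longrightarrow> da_proposers T L idx s \<subseteq> da_kept T L q pr idx s"
  unfolding da_proposers_def by (auto simp: fun_eq_iff da_step_def split: if_splits)

definition higher_proposers ::
    "'t set \<Rightarrow> ('t \<Rightarrow> 's list) \<Rightarrow> ('s \<Rightarrow> 't list) \<Rightarrow> ('t \<Rightarrow> nat) \<Rightarrow> 's \<Rightarrow> 't \<Rightarrow> 't list" where
  "higher_proposers T L pr idx s t =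
     filter (\<lambda>x. x \<in> da_proposers T L idx s) (takeWhile (\<lambda>y. y \<noteq> t) (pr s))"

lemma da_kept_eq_take_higher_proposers:
  "q s \<le> length (higher_proposers T L pr idx s t) \<Longrightarrow>
    da_kept T L q pr idx s = set (take (q s) (higher_proposers T L pr idx s t))"
  unfolding da_kept_def higher_proposers_def by (simp add: take_filter_takeWhile)

lemma higher_proposers_if_rejected:
  "t \<in> da_proposers T L idx s \<Longrightarrow> t \<in> set (pr s) \<Longrightarrow> t \<notin> da_kept T L q pr idx s \<Longrightarrow>
    q s \<le> length (higher_proposers T L pr idx s t)"
  unfolding da_kept_def higher_proposers_def by (rule le_length_filter_takeWhile_if_notin_take)

lemma higher_proposers_step:
  assumes "distinct (pr s)" and full: "q s \<le> length (higher_proposers T L pr idx s t)"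
  shows "q s \<le> length (higher_proposers T L pr (da_step T L q pr idx) s t)"
proof -
  let ?kept = "take (q s) (higher_proposers T L pr idx s t)"
  have "q s = card (set ?kept)"
    using assms by (simp add: distinct_card higher_proposers_def)
  also have "\<dots> \<le> card (set (higher_proposers T L pr (da_step T L q pr idx) s t))"
  proof (rule card_mono)
    show "set ?kept \<subseteq> set (higher_proposers T L pr (da_step T L q pr idx) s t)"
      using da_kept_subset_proposers_step[of T L q pr idx s]
        da_kept_eq_take_higher_proposers[of q s T L pr idx t, OF full]
      unfolding higher_proposers_def by (auto dest: in_set_takeD)
  qed simp
  also have "\<dots> \<le> length (higher_proposers T L pr (da_step T L q pr idx) s t)"
    by (rule card_length)
  finally show ?thesis .
qed

definition da_invariant ::
    "'t set \<Rightarrow> ('t \<Rightarrow> 's list) \<Rightarrow> ('s \<Rightarrow> nat) \<Rightarrow> ('s \<Rightarrow> 't list) \<Rightarrow> ('t \<Rightarrow> nat) \<Rightarrow> bool" where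
  "da_invariant T L q pr idx \<longleftrightarrow> (\<forall>t\<in>T. idx t \<le> length (L t)) \<and>
     (\<forall>t\<in>T. \<forall>j<idx t. t \<in> set (pr (L t ! j)) \<longrightarrow>
        q (L t ! j) \<le> length (higher_proposers T L pr idx (L t ! j) t))"

lemma da_invariant_step:
  assumes lists: "\<And>t. t \<in> T \<Longrightarrow> set (L t) \<subseteq> S"
    and priorities: "\<And>s. s \<in> S \<Longrightarrow> distinct (pr s)"
    and invariant: "da_invariant T L q pr idx"
  shows "da_invariant T L q pr (da_step T L q pr idx)"
  unfolding da_invariant_def
proof (intro conjI ballI allI impI)
  fix t assume "t \<in> T"
  then show "da_step T L q pr idx t \<le> length (L t)"
    using invariant da_step_changed[of T L q pr idx t] unfolding da_invariant_def by force
  fix j assume j: "j < da_step T L q pr idx t" and acceptable: "t \<in> set (pr (L t ! j))"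
  let ?s = "L t ! j"
  have "j < length (L t)"
    using j \<open>da_step T L q pr idx t \<le> length (L t)\<close> by simp
  then have "distinct (pr ?s)"
    using priorities lists \<open>t \<in> T\<close> by (meson nth_mem subsetD)
  moreover have "q ?s \<le> length (higher_proposers T L pr idx ?s t)"
  proof (cases "j < idx t")
    case True
    then show ?thesis
      using invariant \<open>t \<in> T\<close> acceptable unfolding da_invariant_def by blast
  next
    case False
    then have "da_step T L q pr idx t \<noteq> idx t"
      using j by simp
    then have "idx t < length (L t)" "t \<notin> da_kept T L q pr idx (L t ! idx t)" "j = idx t"
      using j False da_step_changed[of T L q pr idx t] by auto
    then have "t \<in> da_proposers T L idx ?s" "t \<notin> da_kept T L q pr idx ?s"
      using \<open>t \<in> T\<close> unfolding da_proposers_def by simp_all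
    then show ?thesis
      using higher_proposers_if_rejected acceptable by metis
  qed
  ultimately show "q ?s \<le> length (higher_proposers T L pr (da_step T L q pr idx) ?s t)"
    by (rule higher_proposers_step)
qed

lemma da_invariant_da_idx:
  assumes "\<And>t. t \<in> T \<Longrightarrow> set (L t) \<subseteq> S" and "\<And>s. s \<in> S \<Longrightarrow> distinct (pr s)"
  shows "da_invariant T L q pr (da_idx T L q pr)"
proof -
  have "da_invariant T L q pr ((da_step T L q pr ^^ n) (\<lambda>_. 0))" for n
  proof (induction n)
    case 0
    then show ?case
      unfolding da_invariant_def by simp
  next
    case (Suc n)
    then show ?case
      by (simp add: da_invariant_step[OF assms])
  qed
  then show ?thesis
    unfolding da_idx_def .
qed

lemma sum_less_da_step:
  assumes "finite T" and "da_step T L q pr idx \<noteq> idx"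
  shows "(\<Sum>t\<in>T. idx t) < (\<Sum>t\<in>T. da_step T L q pr idx t)"
proof (rule sum_strict_mono_ex1[OF assms(1)])
  obtain t where "da_step T L q pr idx t \<noteq> idx t"
    using assms(2) by auto
  then show "\<exists>t\<in>T. idx t < da_step T L q pr idx t"
    using da_step_changed[of T L q pr idx t] by force
qed (simp add: da_step_ge)

lemma da_idx_fixpoint:
  assumes "finite T" and "\<And>t. t \<in> T \<Longrightarrow> set (L t) \<subseteq> S" and "\<And>s. s \<in> S \<Longrightarrow> distinct (pr s)"
  shows "da_step T L q pr (da_idx T L q pr) = da_idx T L q pr"
  unfolding da_idx_def
proof (rule funpow_fixpoint_if_potential_increases[where P = "da_invariant T L q pr"
      and \<phi> = "\<lambda>idx. \<Sum>t\<in>T. idx t"])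
  show "da_invariant T L q pr (\<lambda>_. 0)"
    unfolding da_invariant_def by simp
  show "(\<Sum>t\<in>T. idx t) \<le> (\<Sum>t\<in>T. length (L t))" if "da_invariant T L q pr idx" for idx
    using that unfolding da_invariant_def by (simp add: sum_mono)
qed (use assms in \<open>auto intro: da_invariant_step sum_less_da_step\<close>)

lemma assigned_DA: "assigned T (DA T L q pr) s = da_proposers T L (da_idx T L q pr) s"
  unfolding assigned_def da_proposers_def DA_def Let_def by auto

lemma DA_eq_None_iff: "t \<in> T \<Longrightarrow> DA T L q pr t = None \<longleftrightarrow> length (L t) \<le> da_idx T L q pr t"
  unfolding DA_def Let_def by auto

lemma DA_eq_SomeD:
  "DA T L q pr t = Some s \<Longrightarrow> da_idx T L q pr t < length (L t) \<and> L t ! da_idx T L q pr t = s"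
  unfolding DA_def Let_def by (auto split: if_splits)

lemma DA_assigned_kept:
  assumes "finite T" and "\<And>t. t \<in> T \<Longrightarrow> set (L t) \<subseteq> S" and "\<And>s. s \<in> S \<Longrightarrow> distinct (pr s)"
  shows "assigned T (DA T L q pr) s \<subseteq> da_kept T L q pr (da_idx T L q pr) s"
  unfolding assigned_DA using da_proposers_subset_kept_if_fixpoint[OF da_idx_fixpoint[OF assms]] .

lemma DA_rejected_ranks_below_assigned:
  assumes "finite T" and lists: "\<And>t. t \<in> T \<Longrightarrow> set (L t) \<subseteq> S"
    and priorities: "\<And>s. s \<in> S \<Longrightarrow> distinct (pr s)"
    and "t \<in> T" and rejected: "j < da_idx T L q pr t" "L t ! j = s"
    and acceptable: "t \<in> set (pr s)" and assigned: "t' \<in> assigned T (DA T L q pr) s"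
  shows "index (pr s) t' < index (pr s) t"
proof -
  let ?idx = "da_idx T L q pr"
  have "\<forall>t\<in>T. \<forall>j<?idx t. t \<in> set (pr (L t ! j)) \<longrightarrow>
      q (L t ! j) \<le> length (higher_proposers T L pr ?idx (L t ! j) t)"
    using da_invariant_da_idx[where L = L and pr = pr and q = q, OF lists priorities]
    unfolding da_invariant_def by (rule conjunct2)
  then have "q s \<le> length (higher_proposers T L pr ?idx s t)"
    using \<open>t \<in> T\<close> rejected acceptable by blast
  then have "da_kept T L q pr ?idx s = set (take (q s) (higher_proposers T L pr ?idx s t))"
    by (rule da_kept_eq_take_higher_proposers)
  then have "da_kept T L q pr ?idx s \<subseteq> set (take (index (pr s) t) (pr s))"
    unfolding higher_proposers_def takeWhile_neq_eq_take_index by (auto dest: in_set_takeD)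
  moreover have "t' \<in> da_kept T L q pr ?idx s"
    using DA_assigned_kept[where L = L and pr = pr and q = q, OF assms(1) lists priorities] assigned
    by blast
  ultimately show ?thesis
    by (meson subsetD index_less_if_in_take)
qed

lemma index_less_da_idx_if_prefers:
  assumes "t \<in> T" and "s \<in> set (L t)"
    and "prefers_to_match (\<lambda>t. rank_order S (index (L t)) h) (DA T L q pr) t s"
  shows "index (L t) s < da_idx T L q pr t"
proof (cases "DA T L q pr t")
  case None
  then have "length (L t) \<le> da_idx T L q pr t"
    using DA_eq_None_iff[of t T L q pr] \<open>t \<in> T\<close> by simp
  moreover have "index (L t) s < length (L t)"
    using \<open>s \<in> set (L t)\<close> by (simp add: index_less_length_iff)
  ultimately show ?thesis
    by linarith
next
  case (Some s\<^sub>0)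
  then have matched: "da_idx T L q pr t < length (L t)" "L t ! da_idx T L q pr t = s\<^sub>0"
    by (simp_all add: DA_eq_SomeD)
  then have "(s, s\<^sub>0) \<in> rank_order S (index (L t)) h" "s\<^sub>0 \<in> set (L t)"
    using assms(3) Some unfolding prefers_to_match_def by auto
  then have "index (L t) s < index (L t) s\<^sub>0"
    by (blast dest: rank_order_index_less)
  also have "index (L t) s\<^sub>0 \<le> da_idx T L q pr t"
    using index_nth_le[OF matched(1)] matched(2) by simp
  finally show ?thesis .
qed

lemma DA_stable:
  assumes "finite T" and lists: "\<And>t. t \<in> T \<Longrightarrow> set (L t) \<subseteq> S"
    and priorities: "\<And>s. s \<in> S \<Longrightarrow> distinct (pr s) \<and> set (pr s) \<subseteq> applicants T L s"
    and non_wasteful: "(\<forall>s\<in>S. card (assigned T (DA T L q pr) s) = q s) \<or> (\<forall>t\<in>T. DA T L q pr t \<noteq> None)"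
  shows "stable T S q (\<lambda>t. rank_order S (index (L t)) h) (\<lambda>s. rank_order T (index (pr s)) g)
    (DA T L q pr)"
  unfolding stable_def
proof (intro ballI conjI notI)
  have distinct_pr: "\<And>s. s \<in> S \<Longrightarrow> distinct (pr s)"
    using priorities by blast
  fix t s assume "t \<in> T" "s \<in> S"
  show False if "DA T L q pr t = None \<and> card (assigned T (DA T L q pr) s) < q s"
    using that non_wasteful \<open>t \<in> T\<close> \<open>s \<in> S\<close> by auto
  assume "prefers_to_match (\<lambda>t. rank_order S (index (L t)) h) (DA T L q pr) t s \<and>
    (\<exists>t'\<in>assigned T (DA T L q pr) s. (t, t') \<in> rank_order T (index (pr s)) g)"
  then obtain t'
    where prefers: "prefers_to_match (\<lambda>t. rank_order S (index (L t)) h) (DA T L q pr) t s"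
    and t': "t' \<in> assigned T (DA T L q pr) s" and "(t, t') \<in> rank_order T (index (pr s)) g"
    by blast
  moreover have "t' \<in> da_kept T L q pr (da_idx T L q pr) s"
    using DA_assigned_kept[where L = L and pr = pr and q = q, OF assms(1) lists distinct_pr] t'
    by blast
  then have "t' \<in> set (pr s)"
    using da_kept_subset[of T L q pr "da_idx T L q pr" s] by blast
  ultimately have acceptable: "t \<in> set (pr s)" and "index (pr s) t < index (pr s) t'"
    using rank_order_index_less[of t t' T "pr s" g] by simp_all
  have "s \<in> set (L t)"
    using acceptable priorities[OF \<open>s \<in> S\<close>] unfolding applicants_def by blast
  with \<open>t \<in> T\<close> prefers have rejected: "index (L t) s < da_idx T L q pr t"
    by (intro index_less_da_idx_if_prefers)
  have "L t ! index (L t) s = s"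
    using \<open>s \<in> set (L t)\<close> by (rule nth_index)
  with rejected have "index (pr s) t' < index (pr s) t"
    using DA_rejected_ranks_below_assigned[where L = L and pr = pr and q = q,
        OF assms(1) lists distinct_pr \<open>t \<in> T\<close>] acceptable t'
    by blast
  with \<open>index (pr s) t < index (pr s) t'\<close> show False
    by simp
qed

theorem mainTheorem2:
  fixes T :: "'t set" and S :: "'s set"
    and q :: "'s \<Rightarrow> nat"
    and L :: "'t \<Rightarrow> 's list"
    and pr :: "'s \<Rightarrow> 't list"
  assumes "finite T" and "finite S"
    and "\<And>t. t \<in> T \<Longrightarrow> distinct (L t) \<and> set (L t) \<subseteq> S"
    and "\<And>s. s \<in> S \<Longrightarrow> distinct (pr s) \<and> set (pr s) \<subseteq> applicants T L s"
    and "(\<forall>s\<in>S. card (assigned T (DA T L q pr) s) = q s) \<or> (\<forall>t\<in>T. DA T L q pr t \<noteq> None)"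
  shows "\<exists>pref :: 't \<Rightarrow> ('s \<times> 's) set. \<exists>prio :: 's \<Rightarrow> ('t \<times> 't) set.
      (\<forall>t\<in>T. pref t \<subseteq> S \<times> S \<and> strict_linear_order_on S (pref t)) \<and>
      (\<forall>s\<in>S. prio s \<subseteq> T \<times> T \<and> strict_linear_order_on T (prio s)) \<and>
      (\<forall>t\<in>T. \<forall>i j. i < j \<and> j < length (L t) \<longrightarrow> (L t ! i, L t ! j) \<in> pref t) \<and>
      (\<forall>s\<in>S. \<forall>i j. i < j \<and> j < length (pr s) \<longrightarrow> (pr s ! i, pr s ! j) \<in> prio s) \<and>
      (\<forall>s\<in>S. \<forall>t\<in>set (pr s). \<forall>t'\<in>applicants T L s - set (pr s). (t, t') \<in> prio s) \<and>
      stable T S q pref prio (DA T L q pr)"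
proof -
  obtain g :: "'t \<Rightarrow> nat" where g: "inj_on g T"
    using finite_imp_inj_to_nat_seg[OF assms(1)] by blast
  obtain h :: "'s \<Rightarrow> nat" where h: "inj_on h S"
    using finite_imp_inj_to_nat_seg[OF assms(2)] by blast
  let ?pref = "\<lambda>t. rank_order S (index (L t)) h"
  let ?prio = "\<lambda>s. rank_order T (index (pr s)) g"
  have applicants_in_T: "applicants T L s \<subseteq> T" for s
    unfolding applicants_def by blast
  have pref_linear: "\<forall>t\<in>T. ?pref t \<subseteq> S \<times> S \<and> strict_linear_order_on S (?pref t)"
    using rank_order_subset strict_linear_order_on_rank_order[OF h] by blast
  have prio_linear: "\<forall>s\<in>S. ?prio s \<subseteq> T \<times> T \<and> strict_linear_order_on T (?prio s)"
    using rank_order_subset strict_linear_order_on_rank_order[OF g] by blast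
  have pref_extends_lists:
    "\<forall>t\<in>T. \<forall>i j. i < j \<and> j < length (L t) \<longrightarrow> (L t ! i, L t ! j) \<in> ?pref t"
    using assms(3) by (blast intro: nth_in_rank_order_index)
  have prio_extends_priorities:
    "\<forall>s\<in>S. \<forall>i j. i < j \<and> j < length (pr s) \<longrightarrow> (pr s ! i, pr s ! j) \<in> ?prio s"
    using assms(4) applicants_in_T by (blast intro: nth_in_rank_order_index)
  have acceptable_first:
    "\<forall>s\<in>S. \<forall>t\<in>set (pr s). \<forall>t'\<in>applicants T L s - set (pr s). (t, t') \<in> ?prio s"
    using assms(4) applicants_in_T by (blast intro: listed_unlisted_in_rank_order_index)
  have "stable T S q ?pref ?prio (DA T L q pr)"
    by (rule DA_stable[OF assms(1) _ _ assms(5)]) (use assms(3,4) in blast)+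
  with pref_linear prio_linear pref_extends_lists prio_extends_priorities acceptable_first
  show ?thesis
    by (intro exI[of _ ?pref] exI[of _ ?prio]) simp
qed

end
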